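(* Let $\mathcal C=(X,\{\succsim_i\}_{i\in N\cup\{A\}})$ be a collective choice problem satisfying Generic Finite Alternatives. Then the following holds if and only if $\mathcal C$ is Manipulable: for every game (amendment procedure) with at least $|X|-1$ rounds and for every initial default $x^0\in X$, in every equilibrium the implemented policy is the agenda setter's favorite policy (with probability one).
   Context: Collective choice problem: a set $N=\{1,\dots,n\}$ of voters with $n$ odd and a non-voting agenda setter $A$ choose a policy from a compact metrizable policy space $X$. Each player $i\in N\cup\{A\}$ has a complete, transitive, continuous preference $\succsim_i$ on $X$ with a continuous utility representation $u_i$. Write $x\succsim_M y$ (resp. $x\succ_M y$) if a strict majority of voters weakly (resp. strictly) prefer $x$ to $y$. $X_A^*=\arg\max_{x\in X}u_A(x)$ is the set of the agenda setter's favorite policies. A policy $x$ is Improvable if there is $y$ with $y\succ_A x$ and $y\succ_M x$, and Unimprovable otherwise. $\mathcal C$ is Manipulable if every $x\notin X_A^*$ is Improvable. $\mathcal C$ satisfies Generic Finite Alternatives if $X$ is finite and every $\succsim_i$ ($i\in N\cup\{A\}$) is antisymmetric (strict). Amendment procedure with $T$ rounds: an exogenous initial default $x^0$ is given; in each round $t=1,\dots,T$ the agenda setter proposes $a^t\in X$ (possibly equal to the default), which is put to a simultaneous vote against the current default $x^{t-1}$; if a majority of voters vote yes then $x^t=a^t$, otherwise $x^t=x^{t-1}$; the policy $x^T$ is implemented and determines payoffs. Players observe the full history of proposals and votes and may condition (possibly mixed) actions on it. Equilibrium means subgame perfect equilibrium with as-if-pivotal voting: at any history where, conditional on the proposal passing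 (resp. being rejected), the continuation outcome is $x$ (resp. $y$) irrespective of the composition of the current vote, every voter with a strict preference between $x$ and $y$ votes for the option leading to her preferred outcome. *)

theory Defs
  imports "HOL-Probability.Probability"
begin

(* Collective choice problem: policies = finite type 'a (X = UNIV), voters = finite type 'v
   (N = UNIV, |N| = CARD('v)), setter utility uA, voter utilities u i. *)

definition strict_majority :: "('v::finite \<Rightarrow> bool) \<Rightarrow> bool" where
  "strict_majority P \<longleftrightarrow> 2 * card {i. P i} > CARD('v)"

definition maj_strict_pref :: "('v::finite \<Rightarrow> 'a \<Rightarrow> real) \<Rightarrow> 'a \<Rightarrow> 'a \<Rightarrow> bool" where
  "maj_strict_pref u x y \<longleftrightarrow> strict_majority (\<lambda>i. u i x > u i y)"

definition fav :: "('a \<Rightarrow> real) \<Rightarrow> 'a set" where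
  "fav uA = {x. \<forall>y. uA y \<le> uA x}"

definition improvable :: "('a \<Rightarrow> real) \<Rightarrow> ('v::finite \<Rightarrow> 'a \<Rightarrow> real) \<Rightarrow> 'a \<Rightarrow> bool" where
  "improvable uA u x \<longleftrightarrow> (\<exists>y. uA y > uA x \<and> maj_strict_pref u y x)"

definition manipulable :: "('a \<Rightarrow> real) \<Rightarrow> ('v::finite \<Rightarrow> 'a \<Rightarrow> real) \<Rightarrow> bool" where
  "manipulable uA u \<longleftrightarrow> (\<forall>x. x \<notin> fav uA \<longrightarrow> improvable uA u x)"

(* Generic Finite Alternatives: X finite (type class) and all preferences strict *)
definition generic_finite_alternatives :: "('a::finite \<Rightarrow> real) \<Rightarrow> ('v::finite \<Rightarrow> 'a \<Rightarrow> real) \<Rightarrow> bool" where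
  "generic_finite_alternatives uA u \<longleftrightarrow> inj uA \<and> (\<forall>i. inj (u i))"

(* Amendment procedure.  A history is the list (in chronological order) of past rounds,
   each recorded as (proposal, vote profile). *)
type_synonym ('a, 'v) hist = "('a \<times> ('v \<Rightarrow> bool)) list"
type_synonym ('a, 'v) setter_strat = "('a, 'v) hist \<Rightarrow> 'a pmf"
type_synonym ('a, 'v) voter_strat = "('a, 'v) hist \<Rightarrow> 'a \<Rightarrow> bool pmf"

definition cur_default :: "'a \<Rightarrow> ('a, 'v::finite) hist \<Rightarrow> 'a" where
  "cur_default x0 h = foldl (\<lambda>x (a, v). if strict_majority v then a else x) x0 h"

definition vote_dist :: "('v::finite \<Rightarrow> ('a, 'v) voter_strat) \<Rightarrow> ('a, 'v) hist \<Rightarrow> 'a \<Rightarrow> ('v \<Rightarrow> bool) pmf" where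
  "vote_dist \<sigma>V h a = Pi_pmf UNIV False (\<lambda>i. \<sigma>V i h a)"

primrec play :: "'a \<Rightarrow> ('a, 'v::finite) setter_strat \<Rightarrow> ('v \<Rightarrow> ('a, 'v) voter_strat)
                 \<Rightarrow> nat \<Rightarrow> ('a, 'v) hist \<Rightarrow> 'a pmf" where
  "play x0 \<sigma>A \<sigma>V 0 h = return_pmf (cur_default x0 h)"
| "play x0 \<sigma>A \<sigma>V (Suc k) h =
     bind_pmf (\<sigma>A h) (\<lambda>a. bind_pmf (vote_dist \<sigma>V h a) (\<lambda>v. play x0 \<sigma>A \<sigma>V k (h @ [(a, v)])))"

(* distribution of the implemented policy at the voting node (h, a), k rounds remaining
   after the current one *)
definition vplay :: "'a \<Rightarrow> ('a, 'v::finite) setter_strat \<Rightarrow> ('v \<Rightarrow> ('a, 'v) voter_strat)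
                 \<Rightarrow> nat \<Rightarrow> ('a, 'v) hist \<Rightarrow> 'a \<Rightarrow> 'a pmf" where
  "vplay x0 \<sigma>A \<sigma>V k h a = bind_pmf (vote_dist \<sigma>V h a) (\<lambda>v. play x0 \<sigma>A \<sigma>V k (h @ [(a, v)]))"

definition EU :: "('a \<Rightarrow> real) \<Rightarrow> 'a pmf \<Rightarrow> real" where
  "EU f p = measure_pmf.expectation p f"

definition spe :: "('a \<Rightarrow> real) \<Rightarrow> ('v::finite \<Rightarrow> 'a \<Rightarrow> real) \<Rightarrow> nat \<Rightarrow> 'a
                 \<Rightarrow> ('a, 'v) setter_strat \<Rightarrow> ('v \<Rightarrow> ('a, 'v) voter_strat) \<Rightarrow> bool" where
  "spe uA u T x0 \<sigma>A \<sigma>V \<longleftrightarrow>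
     (\<forall>h. length h < T \<longrightarrow>
        (\<forall>\<sigma>A'. EU uA (play x0 \<sigma>A' \<sigma>V (T - length h) h) \<le> EU uA (play x0 \<sigma>A \<sigma>V (T - length h) h)) \<and>
        (\<forall>i \<sigma>'. EU (u i) (play x0 \<sigma>A (\<sigma>V(i := \<sigma>')) (T - length h) h)
                    \<le> EU (u i) (play x0 \<sigma>A \<sigma>V (T - length h) h))) \<and>
     (\<forall>h a. length h < T \<longrightarrow>
        (\<forall>\<sigma>A'. EU uA (vplay x0 \<sigma>A' \<sigma>V (T - Suc (length h)) h a)
                 \<le> EU uA (vplay x0 \<sigma>A \<sigma>V (T - Suc (length h)) h a)) \<and>
        (\<forall>i \<sigma>'. EU (u i) (vplay x0 \<sigma>A (\<sigma>V(i := \<sigma>')) (T - Suc (length h)) h a)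
                    \<le> EU (u i) (vplay x0 \<sigma>A \<sigma>V (T - Suc (length h)) h a)))"

definition as_if_pivotal :: "('v::finite \<Rightarrow> 'a \<Rightarrow> real) \<Rightarrow> nat \<Rightarrow> 'a
                 \<Rightarrow> ('a, 'v) setter_strat \<Rightarrow> ('v \<Rightarrow> ('a, 'v) voter_strat) \<Rightarrow> bool" where
  "as_if_pivotal u T x0 \<sigma>A \<sigma>V \<longleftrightarrow>
     (\<forall>h a x y. length h < T \<longrightarrow>
        (\<forall>v. strict_majority v \<longrightarrow> play x0 \<sigma>A \<sigma>V (T - Suc (length h)) (h @ [(a, v)]) = return_pmf x) \<longrightarrow>
        (\<forall>v. \<not> strict_majority v \<longrightarrow> play x0 \<sigma>A \<sigma>V (T - Suc (length h)) (h @ [(a, v)]) = return_pmf y) \<longrightarrow>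
        (\<forall>i. (u i x > u i y \<longrightarrow> \<sigma>V i h a = return_pmf True) \<and>
             (u i y > u i x \<longrightarrow> \<sigma>V i h a = return_pmf False)))"

definition equilibrium :: "('a \<Rightarrow> real) \<Rightarrow> ('v::finite \<Rightarrow> 'a \<Rightarrow> real) \<Rightarrow> nat \<Rightarrow> 'a
                 \<Rightarrow> ('a, 'v) setter_strat \<Rightarrow> ('v \<Rightarrow> ('a, 'v) voter_strat) \<Rightarrow> bool" where
  "equilibrium uA u T x0 \<sigma>A \<sigma>V \<longleftrightarrow> spe uA u T x0 \<sigma>A \<sigma>V \<and> as_if_pivotal u T x0 \<sigma>A \<sigma>V"

end

theory Submission
  imports Defs
begin

text \<open>With strict preferences, as-if-pivotal voting makes every vote sincere, so by backward
  induction every equilibrium is pure: with \<open>k\<close> rounds left and default \<open>x\<close> it implements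
  \<open>outcome uA u k x\<close>, the setter's best choice among the continuation outcome of \<open>x\<close> and those
  continuation outcomes that beat it in a majority vote.  The set of policies reachable in this
  way shrinks as rounds are added; under manipulability every additional round removes the
  setter's worst reachable policy until only one is left, which must then be her favourite, so
  \<open>|X| - 1\<close> rounds suffice.  Conversely, starting from an unimprovable policy that is not her
  favourite, the backward-induction profile is an equilibrium that never leaves it.\<close>

lemma EU_return_pmf [simp]: "EU F (return_pmf x) = F x"
  by (simp add: EU_def)

lemma EU_le_const:
  fixes p :: "'b::finite pmf"
  assumes "\<forall>z\<in>set_pmf p. F z \<le> c"
  shows "EU F p \<le> c"
  unfolding EU_def
  using assms by (intro measure_pmf.integral_le_const integrable_measure_pmf_finite)
    (auto simp: AE_measure_pmf_iff)

lemma EU_const_le_imp_eq_on_support: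
  fixes p :: "'b::finite pmf"
  assumes le: "\<forall>z\<in>set_pmf p. F z \<le> c" and ge: "c \<le> EU F p" and z: "z \<in> set_pmf p"
  shows "F z = c"
proof -
  have int: "integrable (measure_pmf p) G" for G :: "'b \<Rightarrow> real"
    by (rule integrable_measure_pmf_finite) simp
  have nonneg: "AE x in measure_pmf p. 0 \<le> c - F x"
    using le by (simp add: AE_measure_pmf_iff)
  have "EU (\<lambda>x. c - F x) p = c - EU F p"
    unfolding EU_def using int by simp
  moreover have "0 \<le> EU (\<lambda>x. c - F x) p"
    unfolding EU_def using nonneg by (rule integral_nonneg_AE)
  ultimately have "EU (\<lambda>x. c - F x) p = 0"
    using ge by simp
  then have "AE x in measure_pmf p. c - F x = 0"
    using integral_nonneg_eq_0_iff_AE[OF int nonneg] by (simp add: EU_def)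
  then show ?thesis using z by (simp add: AE_measure_pmf_iff)
qed

lemma EU_bind_pmf:
  fixes p :: "'b::finite pmf" and q :: "'b \<Rightarrow> 'c::finite pmf"
  shows "EU F (bind_pmf p q) = EU (\<lambda>a. EU F (q a)) p"
  unfolding EU_def
  by (subst pmf_expectation_bind[of UNIV]) (auto simp: integral_measure_pmf[of UNIV])

lemma return_pmf_if_EU_attains_max:
  fixes p :: "'b::finite pmf"
  assumes "inj F" and "\<forall>z\<in>set_pmf p. F z \<le> F m" and "F m \<le> EU F p"
  shows "p = return_pmf m"
proof -
  have "set_pmf p \<subseteq> {m}"
    using EU_const_le_imp_eq_on_support[OF assms(2,3)] assms(1) by (auto dest: injD)
  then show ?thesis by (simp add: set_pmf_subset_singleton)
qed

lemma maj_strict_pref_irrefl: "\<not> maj_strict_pref u x x"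
  by (simp add: maj_strict_pref_def strict_majority_def)

lemma strict_majority_True: "strict_majority (\<lambda>_::'v::finite. True)"
  by (simp add: strict_majority_def)

lemma strict_majority_False: "\<not> strict_majority (\<lambda>_::'v::finite. False)"
  by (simp add: strict_majority_def)

lemma strict_majority_mono:
  assumes "\<forall>j. v j \<longrightarrow> w j" and "strict_majority (v :: 'v::finite \<Rightarrow> bool)"
  shows "strict_majority w"
proof -
  have "card {i. v i} \<le> card {i. w i}" using assms(1) by (intro card_mono) auto
  then show ?thesis using assms(2) unfolding strict_majority_def by linarith
qed

definition sincere_votes :: "('v \<Rightarrow> 'a \<Rightarrow> real) \<Rightarrow> 'a \<Rightarrow> 'a \<Rightarrow> 'v \<Rightarrow> bool" where
  "sincere_votes u y x = (\<lambda>i. u i x < u i y)"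

lemma strict_majority_sincere_votes: "strict_majority (sincere_votes u y x) \<longleftrightarrow> maj_strict_pref u y x"
  by (simp add: sincere_votes_def maj_strict_pref_def)

text \<open>Voting sincerely can only add votes for the alternative the voter prefers.\<close>
lemma sincere_vote_optimal:
  fixes v :: "'v::finite \<Rightarrow> bool"
  assumes "\<forall>j. j \<noteq> i \<longrightarrow> v j = sincere_votes u y x j"
  shows "u i (if strict_majority v then y else x)
           \<le> u i (if strict_majority (sincere_votes u y x) then y else x)"
proof (cases "u i x < u i y")
  case True
  then have "\<forall>j. v j \<longrightarrow> sincere_votes u y x j"
    using assms by (auto simp: sincere_votes_def)
  then have "strict_majority v \<Longrightarrow> strict_majority (sincere_votes u y x)"
    by (rule strict_majority_mono)
  then show ?thesis using True by auto
next
  case False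
  then have "\<forall>j. sincere_votes u y x j \<longrightarrow> v j"
    using assms by (auto simp: sincere_votes_def)
  then have "strict_majority (sincere_votes u y x) \<Longrightarrow> strict_majority v"
    by (rule strict_majority_mono)
  then show ?thesis using False by auto
qed

text \<open>\<open>\<phi>\<close> maps the default surviving the current vote to the policy eventually implemented.\<close>
definition vote_winner :: "('v::finite \<Rightarrow> 'a \<Rightarrow> real) \<Rightarrow> ('a \<Rightarrow> 'a) \<Rightarrow> 'a \<Rightarrow> 'a \<Rightarrow> 'a" where
  "vote_winner u \<phi> x a = (if maj_strict_pref u (\<phi> a) (\<phi> x) then \<phi> a else \<phi> x)"

definition best_proposal ::
    "('a \<Rightarrow> real) \<Rightarrow> ('v::finite \<Rightarrow> 'a \<Rightarrow> real) \<Rightarrow> ('a \<Rightarrow> 'a) \<Rightarrow> 'a \<Rightarrow> 'a" where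
  "best_proposal uA u \<phi> x = arg_max (\<lambda>a. uA (vote_winner u \<phi> x a)) (\<lambda>_. True)"

primrec outcome :: "('a \<Rightarrow> real) \<Rightarrow> ('v::finite \<Rightarrow> 'a \<Rightarrow> real) \<Rightarrow> nat \<Rightarrow> 'a \<Rightarrow> 'a" where
  "outcome uA u 0 x = x"
| "outcome uA u (Suc k) x =
     vote_winner u (outcome uA u k) x (best_proposal uA u (outcome uA u k) x)"

lemma vote_winner_self: "vote_winner u \<phi> x x = \<phi> x"
  by (simp add: vote_winner_def maj_strict_pref_irrefl)

lemma vote_winner_sincere:
  "\<phi> (if strict_majority (sincere_votes u (\<phi> a) (\<phi> x)) then a else x) = vote_winner u \<phi> x a"
  by (simp add: vote_winner_def strict_majority_sincere_votes)

lemma best_proposal_max: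
  fixes uA :: "'a::finite \<Rightarrow> real"
  shows "uA (vote_winner u \<phi> x b) \<le> uA (vote_winner u \<phi> x (best_proposal uA u \<phi> x))"
proof -
  let ?f = "\<lambda>a. uA (vote_winner u \<phi> x a)"
  have "Max (range ?f) \<in> range ?f" by (rule Max_in) auto
  then obtain m where "?f m = Max (range ?f)" by (metis rangeE)
  then have m: "\<forall>b. ?f b \<le> ?f m" by simp
  then have "is_arg_max ?f (\<lambda>_. True) m" by (simp add: is_arg_max_linorder)
  then have "is_arg_max ?f (\<lambda>_. True) (arg_max ?f (\<lambda>_. True))"
    unfolding arg_max_def by (rule someI)
  then show ?thesis by (simp add: best_proposal_def is_arg_max_linorder)
qed

lemma outcome_Suc_ge:
  fixes uA :: "'a::finite \<Rightarrow> real"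
  shows "uA (vote_winner u (outcome uA u k) x a) \<le> uA (outcome uA u (Suc k) x)"
  using best_proposal_max by simp

lemma outcome_le_outcome_Suc:
  fixes uA :: "'a::finite \<Rightarrow> real"
  shows "uA (outcome uA u k x) \<le> uA (outcome uA u (Suc k) x)"
  using outcome_Suc_ge[of uA u k x x] by (simp only: vote_winner_self)

lemma outcome_Suc_cases:
  "outcome uA u (Suc k) x = outcome uA u k x \<or>
   maj_strict_pref u (outcome uA u (Suc k) x) (outcome uA u k x) \<and>
   outcome uA u (Suc k) x \<in> range (outcome uA u k)"
  by (auto simp: vote_winner_def)

lemma range_outcome_Suc_subset: "range (outcome uA u (Suc k)) \<subseteq> range (outcome uA u k)"
proof
  fix z assume "z \<in> range (outcome uA u (Suc k))"
  then obtain x where "z = outcome uA u (Suc k) x" by blast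
  then show "z \<in> range (outcome uA u k)" using outcome_Suc_cases[of uA u k x] by auto
qed

lemma reachable_improvement:
  fixes uA :: "'a::finite \<Rightarrow> real"
  assumes "z \<in> range (outcome uA u k)" and "maj_strict_pref u y z" and "uA z < uA y"
  shows "\<exists>s\<in>range (outcome uA u k). maj_strict_pref u s z \<and> uA y \<le> uA s"
  using assms(1)
proof (induction k)
  case 0
  have "y \<in> range (outcome uA u 0)" by (metis outcome.simps(1) rangeI)
  then show ?case using assms(2) by (intro bexI[of _ y]) simp_all
next
  case (Suc k)
  have "z \<in> range (outcome uA u k)" using range_outcome_Suc_subset Suc.prems by (rule subsetD)
  then obtain t where t: "z = outcome uA u k t" by (rule rangeE)
  obtain s where s: "s \<in> range (outcome uA u k)" "maj_strict_pref u s z" "uA y \<le> uA s"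
    using Suc.IH \<open>z \<in> range (outcome uA u k)\<close> by blast
  obtain a where a: "s = outcome uA u k a" using s(1) by (rule rangeE)
  let ?w = "outcome uA u (Suc k) t"
  have "vote_winner u (outcome uA u k) t a = s"
    using s(2) a t by (simp add: vote_winner_def)
  then have ge: "uA s \<le> uA ?w"
    using outcome_Suc_ge[of uA u k t a] by simp
  then have "?w \<noteq> z" using s(3) assms(3) by auto
  then have "maj_strict_pref u ?w z"
    using outcome_Suc_cases[of uA u k t] t by auto
  moreover have "?w \<in> range (outcome uA u (Suc k))" by (rule rangeI)
  ultimately show ?case using ge s(3) by (meson order.trans)
qed

lemma outcome_in_fav_if_range_singleton:
  fixes uA :: "'a::finite \<Rightarrow> real"
  assumes "manipulable uA u" and "range (outcome uA u k) = {w}"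
  shows "w \<in> fav uA"
proof (rule ccontr)
  assume "w \<notin> fav uA"
  then obtain y where "uA w < uA y" "maj_strict_pref u y w"
    using assms(1) unfolding manipulable_def improvable_def by blast
  then obtain s where "s \<in> range (outcome uA u k)" "maj_strict_pref u s w"
    using reachable_improvement[of w uA u k y] assms(2) by auto
  then show False using assms(2) maj_strict_pref_irrefl by (metis singletonD)
qed

text \<open>By manipulability some reachable policy beats \<open>w\<close> in a vote and is better for the
  setter, so with one more round she never settles for \<open>w\<close>.\<close>
lemma worst_outcome_not_in_range_outcome_Suc:
  fixes uA :: "'a::finite \<Rightarrow> real"
  assumes "inj uA" and "manipulable uA u" and "w \<notin> fav uA"
    and w: "w \<in> range (outcome uA u k)" and w_min: "\<forall>z\<in>range (outcome uA u k). uA w \<le> uA z"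
  shows "w \<notin> range (outcome uA u (Suc k))"
proof
  assume "w \<in> range (outcome uA u (Suc k))"
  then obtain t where t: "w = outcome uA u (Suc k) t" by (rule rangeE)
  have "uA (outcome uA u k t) \<le> uA w"
    using outcome_le_outcome_Suc[of uA u k t] t by simp
  moreover have "uA w \<le> uA (outcome uA u k t)" using w_min by blast
  ultimately have tw: "outcome uA u k t = w" using assms(1) by (simp add: inj_eq)
  obtain y where y: "uA w < uA y" "maj_strict_pref u y w"
    using assms(2,3) unfolding manipulable_def improvable_def by blast
  obtain s where s: "s \<in> range (outcome uA u k)" "maj_strict_pref u s w" "uA y \<le> uA s"
    using reachable_improvement[OF w y(2,1)] by blast
  obtain a where a: "s = outcome uA u k a" using s(1) by (rule rangeE)
  have "vote_winner u (outcome uA u k) t a = s" using s(2) a tw by (simp add: vote_winner_def)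
  then have "uA s \<le> uA w" using outcome_Suc_ge[of uA u k t a] t by simp
  then show False using s(3) y(1) by simp
qed

lemma card_range_outcome_Suc_less:
  fixes uA :: "'a::finite \<Rightarrow> real"
  assumes "inj uA" and "manipulable uA u" and "card (range (outcome uA u k)) \<noteq> 1"
  shows "card (range (outcome uA u (Suc k))) < card (range (outcome uA u k))"
proof -
  let ?S = "range (outcome uA u k)"
  have "Min (uA ` ?S) \<in> uA ` ?S" by (rule Min_in) auto
  then obtain w where w: "w \<in> ?S" "uA w = Min (uA ` ?S)" by (metis imageE)
  then have w_min: "\<forall>z\<in>?S. uA w \<le> uA z" by simp
  have "w \<notin> fav uA"
  proof
    assume "w \<in> fav uA"
    have "z = w" if "z \<in> ?S" for z
    proof -
      have "uA z \<le> uA w" using \<open>w \<in> fav uA\<close> by (simp add: fav_def)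
      moreover have "uA w \<le> uA z" using w_min that by (rule bspec)
      ultimately show "z = w" using assms(1) by (simp add: inj_eq)
    qed
    then have "?S \<subseteq> {w}" by (intro subsetI) simp
    then have "card ?S \<le> 1" using card_mono[of "{w}" ?S] by simp
    moreover have "card ?S \<noteq> 0" by simp
    ultimately show False using assms(3) by linarith
  qed
  then have "w \<notin> range (outcome uA u (Suc k))"
    by (rule worst_outcome_not_in_range_outcome_Suc[OF assms(1,2) _ w(1) w_min])
  then have "range (outcome uA u (Suc k)) \<noteq> ?S" using w(1) by metis
  then have "range (outcome uA u (Suc k)) \<subset> ?S"
    using range_outcome_Suc_subset by (rule psubsetI[rotated])
  then show ?thesis by (simp add: psubset_card_mono)
qed

lemma card_range_outcome:
  fixes uA :: "'a::finite \<Rightarrow> real"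
  assumes "inj uA" and "manipulable uA u"
  shows "card (range (outcome uA u k)) + k \<le> CARD('a) \<or> card (range (outcome uA u k)) = 1"
proof (induction k)
  case 0
  then show ?case by simp
next
  case (Suc k)
  show ?case
  proof (cases "card (range (outcome uA u k)) = 1")
    case True
    then have "card (range (outcome uA u (Suc k))) \<le> 1"
      using card_mono[OF _ range_outcome_Suc_subset] by (metis finite)
    moreover have "card (range (outcome uA u (Suc k))) \<noteq> 0" by simp
    ultimately show ?thesis by linarith
  next
    case False
    then show ?thesis
      using Suc.IH card_range_outcome_Suc_less[OF assms False] by linarith
  qed
qed

lemma outcome_in_fav:
  fixes uA :: "'a::finite \<Rightarrow> real"
  assumes "inj uA" and "manipulable uA u" and "CARD('a) - 1 \<le> T"
  shows "outcome uA u T x \<in> fav uA"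
proof -
  have "card (range (outcome uA u T)) \<noteq> 0" by simp
  then have "card (range (outcome uA u T)) = 1"
    using card_range_outcome[OF assms(1,2), of T] assms(3) by linarith
  then obtain w where "range (outcome uA u T) = {w}" by (rule card_1_singletonE)
  then show ?thesis
    using outcome_in_fav_if_range_singleton[OF assms(2)] by (metis rangeI singletonD)
qed

lemma outcome_unimprovable:
  fixes uA :: "'a::finite \<Rightarrow> real"
  assumes "inj uA" and "\<not> improvable uA u x"
  shows "outcome uA u k x = x"
proof (induction k)
  case 0
  then show ?case by simp
next
  case (Suc k)
  show ?case
  proof (rule ccontr)
    assume ne: "outcome uA u (Suc k) x \<noteq> x"
    then have "maj_strict_pref u (outcome uA u (Suc k) x) x"
      using outcome_Suc_cases[of uA u k x] Suc.IH by auto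
    moreover have "uA x < uA (outcome uA u (Suc k) x)"
      using outcome_le_outcome_Suc[of uA u k x] Suc.IH ne assms(1)
      by (metis injD order_le_less)
    ultimately show False using assms(2) unfolding improvable_def by blast
  qed
qed

lemma cur_default_Nil [simp]: "cur_default x0 [] = x0"
  by (simp add: cur_default_def)

lemma cur_default_snoc:
  "cur_default x0 (h @ [(a, v)]) = (if strict_majority v then a else cur_default x0 h)"
  by (simp add: cur_default_def)

lemma play_Suc_vplay:
  "play x0 \<sigma>A \<sigma>V (Suc k) h = bind_pmf (\<sigma>A h) (\<lambda>a. vplay x0 \<sigma>A \<sigma>V k h a)"
  by (simp add: vplay_def)

lemma play_cong_setter:
  assumes "\<forall>h'. length h \<le> length h' \<longrightarrow> \<sigma>A' h' = \<sigma>A h'"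
  shows "play x0 \<sigma>A' \<sigma>V k h = play x0 \<sigma>A \<sigma>V k h"
  using assms
proof (induction k arbitrary: h)
  case 0
  then show ?case by simp
next
  case (Suc k)
  have "play x0 \<sigma>A' \<sigma>V k (h @ [(a, v)]) = play x0 \<sigma>A \<sigma>V k (h @ [(a, v)])" for a v
    using Suc.prems by (intro Suc.IH) auto
  moreover have "\<sigma>A' h = \<sigma>A h" using Suc.prems by simp
  ultimately show ?case by simp
qed

lemma vplay_cong_setter:
  assumes "\<forall>h'. length h < length h' \<longrightarrow> \<sigma>A' h' = \<sigma>A h'"
  shows "vplay x0 \<sigma>A' \<sigma>V k h a = vplay x0 \<sigma>A \<sigma>V k h a"
  unfolding vplay_def using assms by (intro bind_pmf_cong refl play_cong_setter) auto

lemma vote_dist_return_pmf: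
  assumes "\<forall>i. \<sigma>V i h a = return_pmf (s i)"
  shows "vote_dist \<sigma>V h a = return_pmf s"
  using assms by (simp add: vote_dist_def)

lemma vote_in_set_vote_dist:
  "v \<in> set_pmf (vote_dist \<sigma>V h a) \<Longrightarrow> v i \<in> set_pmf (\<sigma>V i h a)"
  unfolding vote_dist_def by (simp add: set_Pi_pmf PiE_dflt_def)

text \<open>With strict preferences, as-if-pivotal voters vote sincerely whenever their vote matters.\<close>
lemma vplay_as_if_pivotal:
  fixes u :: "'v::finite \<Rightarrow> 'a \<Rightarrow> real"
  assumes inj_u: "\<forall>i. inj (u i)" and aip: "as_if_pivotal u T x0 \<sigma>A \<sigma>V"
    and len: "length h + Suc k = T"
    and cont: "\<forall>v. play x0 \<sigma>A \<sigma>V k (h @ [(a, v)]) = return_pmf (\<phi> (cur_default x0 (h @ [(a, v)])))"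
  shows "vplay x0 \<sigma>A \<sigma>V k h a = return_pmf (vote_winner u \<phi> (cur_default x0 h) a)"
proof -
  let ?x = "cur_default x0 h"
  have k: "T - Suc (length h) = k" using len by simp
  have yes: "\<forall>v. strict_majority v \<longrightarrow>
      play x0 \<sigma>A \<sigma>V (T - Suc (length h)) (h @ [(a, v)]) = return_pmf (\<phi> a)"
    and no: "\<forall>v. \<not> strict_majority v \<longrightarrow>
      play x0 \<sigma>A \<sigma>V (T - Suc (length h)) (h @ [(a, v)]) = return_pmf (\<phi> ?x)"
    using cont by (simp_all add: k cur_default_snoc)
  have "length h < T" using len by simp
  then have piv: "\<forall>i. (u i (\<phi> a) > u i (\<phi> ?x) \<longrightarrow> \<sigma>V i h a = return_pmf True) \<and>
                     (u i (\<phi> ?x) > u i (\<phi> a) \<longrightarrow> \<sigma>V i h a = return_pmf False)"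
    using aip yes no unfolding as_if_pivotal_def by blast
  have vplay: "vplay x0 \<sigma>A \<sigma>V k h a =
      bind_pmf (vote_dist \<sigma>V h a) (\<lambda>v. return_pmf (\<phi> (if strict_majority v then a else ?x)))"
    unfolding vplay_def using cont by (simp add: cur_default_snoc)
  show ?thesis
  proof (cases "\<phi> a = \<phi> ?x")
    case True
    then have "vplay x0 \<sigma>A \<sigma>V k h a = bind_pmf (vote_dist \<sigma>V h a) (\<lambda>_. return_pmf (\<phi> ?x))"
      unfolding vplay by (intro bind_pmf_cong) auto
    moreover have "vote_winner u \<phi> ?x a = \<phi> ?x"
      using True by (simp add: vote_winner_def maj_strict_pref_irrefl)
    ultimately show ?thesis by simp
  next
    case False
    have "\<sigma>V i h a = return_pmf (sincere_votes u (\<phi> a) (\<phi> ?x) i)" for i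
    proof -
      have "u i (\<phi> a) \<noteq> u i (\<phi> ?x)" using False inj_u by (simp add: inj_eq)
      then show ?thesis using piv by (auto simp: sincere_votes_def neq_iff)
    qed
    then have "vote_dist \<sigma>V h a = return_pmf (sincere_votes u (\<phi> a) (\<phi> ?x))"
      by (simp add: vote_dist_return_pmf)
    then show ?thesis by (simp add: vplay bind_return_pmf vote_winner_sincere)
  qed
qed

lemma equilibrium_play:
  fixes uA :: "'a::finite \<Rightarrow> real" and u :: "'v::finite \<Rightarrow> 'a \<Rightarrow> real"
  assumes inj_A: "inj uA" and inj_u: "\<forall>i. inj (u i)" and eq: "equilibrium uA u T x0 \<sigma>A \<sigma>V"
  shows "length h + k = T \<Longrightarrow> play x0 \<sigma>A \<sigma>V k h = return_pmf (outcome uA u k (cur_default x0 h))"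
proof (induction k arbitrary: h)
  case 0
  then show ?case by simp
next
  case (Suc k)
  let ?x = "cur_default x0 h" and ?\<phi> = "outcome uA u k"
  have lt: "length h < T" and k: "T - length h = Suc k"
    using Suc.prems by auto
  have cont: "\<forall>a v. play x0 \<sigma>A \<sigma>V k (h @ [(a, v)])
                      = return_pmf (?\<phi> (cur_default x0 (h @ [(a, v)])))"
    using Suc.IH Suc.prems by simp
  have vp: "vplay x0 \<sigma>A \<sigma>V k h a = return_pmf (vote_winner u ?\<phi> ?x a)" for a
    using eq Suc.prems cont
    by (intro vplay_as_if_pivotal[OF inj_u]) (simp_all add: equilibrium_def)
  \<comment> \<open>Proposing \<open>best_proposal\<close> secures \<open>outcome uA u (Suc k) ?x\<close>, and nothing reachable is
    better for the setter, so subgame perfection forces exactly this outcome.\<close>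
  define \<sigma>A' where "\<sigma>A' = \<sigma>A(h := return_pmf (best_proposal uA u ?\<phi> ?x))"
  have "play x0 \<sigma>A' \<sigma>V (Suc k) h = vplay x0 \<sigma>A' \<sigma>V k h (best_proposal uA u ?\<phi> ?x)"
    by (simp only: play_Suc_vplay \<sigma>A'_def fun_upd_same bind_return_pmf)
  also have "\<dots> = vplay x0 \<sigma>A \<sigma>V k h (best_proposal uA u ?\<phi> ?x)"
    by (rule vplay_cong_setter) (simp add: \<sigma>A'_def)
  finally have "play x0 \<sigma>A' \<sigma>V (Suc k) h = return_pmf (outcome uA u (Suc k) ?x)"
    by (simp add: vp)
  moreover have "EU uA (play x0 \<sigma>A' \<sigma>V (T - length h) h) \<le> EU uA (play x0 \<sigma>A \<sigma>V (T - length h) h)"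
    using eq lt unfolding equilibrium_def spe_def by blast
  ultimately have "uA (outcome uA u (Suc k) ?x) \<le> EU uA (play x0 \<sigma>A \<sigma>V (Suc k) h)"
    by (simp only: k EU_return_pmf)
  moreover have "\<forall>z\<in>set_pmf (play x0 \<sigma>A \<sigma>V (Suc k) h). uA z \<le> uA (outcome uA u (Suc k) ?x)"
    unfolding play_Suc_vplay vp using outcome_Suc_ge by (auto simp del: outcome.simps)
  ultimately show ?case by (intro return_pmf_if_EU_attains_max[OF inj_A])
qed

text \<open>\<open>T - Suc (length h)\<close> is the number of rounds that remain after the current one.\<close>
definition backward_setter ::
    "('a \<Rightarrow> real) \<Rightarrow> ('v::finite \<Rightarrow> 'a \<Rightarrow> real) \<Rightarrow> nat \<Rightarrow> 'a \<Rightarrow> ('a, 'v) setter_strat" where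
  "backward_setter uA u T x0 h =
     return_pmf (best_proposal uA u (outcome uA u (T - Suc (length h))) (cur_default x0 h))"

definition backward_voters ::
    "('a \<Rightarrow> real) \<Rightarrow> ('v::finite \<Rightarrow> 'a \<Rightarrow> real) \<Rightarrow> nat \<Rightarrow> 'a \<Rightarrow> 'v \<Rightarrow> ('a, 'v) voter_strat" where
  "backward_voters uA u T x0 i h a =
     return_pmf (sincere_votes u (outcome uA u (T - Suc (length h)) a)
                                 (outcome uA u (T - Suc (length h)) (cur_default x0 h)) i)"

lemma backward_setter_eq:
  assumes "length h + Suc k = T"
  shows "backward_setter uA u T x0 h =
           return_pmf (best_proposal uA u (outcome uA u k) (cur_default x0 h))"
  by (simp add: backward_setter_def assms[symmetric])

lemma backward_voters_eq:
  assumes "length h + Suc k = T"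
  shows "backward_voters uA u T x0 i h a =
           return_pmf (sincere_votes u (outcome uA u k a) (outcome uA u k (cur_default x0 h)) i)"
  by (simp add: backward_voters_def assms[symmetric])

lemma vplay_backward_voters:
  assumes "length h + Suc k = T"
  shows "vplay x0 \<sigma>A (backward_voters uA u T x0) k h a =
           play x0 \<sigma>A (backward_voters uA u T x0) k
             (h @ [(a, sincere_votes u (outcome uA u k a) (outcome uA u k (cur_default x0 h)))])"
proof -
  have "vote_dist (backward_voters uA u T x0) h a =
          return_pmf (sincere_votes u (outcome uA u k a) (outcome uA u k (cur_default x0 h)))"
    by (rule vote_dist_return_pmf) (simp add: backward_voters_eq[OF assms])
  then show ?thesis unfolding vplay_def by (simp only: bind_return_pmf)
qed

lemma outcome_after_sincere_vote:
  "outcome uA u k (cur_default x0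
     (h @ [(a, sincere_votes u (outcome uA u k a) (outcome uA u k (cur_default x0 h)))]))
   = vote_winner u (outcome uA u k) (cur_default x0 h) a"
  by (simp only: cur_default_snoc vote_winner_sincere)

lemma backward_play:
  "length h + k = T \<Longrightarrow>
   play x0 (backward_setter uA u T x0) (backward_voters uA u T x0) k h
     = return_pmf (outcome uA u k (cur_default x0 h))"
proof (induction k arbitrary: h)
  case 0
  then show ?case by simp
next
  case (Suc k)
  let ?a = "best_proposal uA u (outcome uA u k) (cur_default x0 h)"
  have "play x0 (backward_setter uA u T x0) (backward_voters uA u T x0) (Suc k) h =
        vplay x0 (backward_setter uA u T x0) (backward_voters uA u T x0) k h ?a"
    by (simp only: play_Suc_vplay backward_setter_eq[OF Suc.prems] bind_return_pmf)
  also have "\<dots> = return_pmf (vote_winner u (outcome uA u k) (cur_default x0 h) ?a)"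
    using Suc.prems by (simp add: vplay_backward_voters Suc.IH outcome_after_sincere_vote)
  finally show ?case by simp
qed

lemma backward_vplay:
  assumes "length h + Suc k = T"
  shows "vplay x0 (backward_setter uA u T x0) (backward_voters uA u T x0) k h a =
           return_pmf (vote_winner u (outcome uA u k) (cur_default x0 h) a)"
  using assms by (simp add: vplay_backward_voters backward_play outcome_after_sincere_vote)

lemma backward_setter_deviation:
  fixes uA :: "'a::finite \<Rightarrow> real"
  shows "length h + k = T \<Longrightarrow>
    EU uA (play x0 \<sigma>A (backward_voters uA u T x0) k h) \<le> uA (outcome uA u k (cur_default x0 h))"
proof (induction k arbitrary: h)
  case 0
  then show ?case by simp
next
  case (Suc k)
  let ?x = "cur_default x0 h"
  have "EU uA (vplay x0 \<sigma>A (backward_voters uA u T x0) k h a) \<le> uA (outcome uA u (Suc k) ?x)" for a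
  proof -
    let ?s = "sincere_votes u (outcome uA u k a) (outcome uA u k ?x)"
    have "EU uA (vplay x0 \<sigma>A (backward_voters uA u T x0) k h a)
          = EU uA (play x0 \<sigma>A (backward_voters uA u T x0) k (h @ [(a, ?s)]))"
      using Suc.prems by (simp only: vplay_backward_voters)
    also have "\<dots> \<le> uA (outcome uA u k (cur_default x0 (h @ [(a, ?s)])))"
      by (rule Suc.IH) (use Suc.prems in simp)
    also have "\<dots> = uA (vote_winner u (outcome uA u k) ?x a)"
      by (simp only: outcome_after_sincere_vote)
    also have "\<dots> \<le> uA (outcome uA u (Suc k) ?x)" by (rule outcome_Suc_ge)
    finally show ?thesis .
  qed
  then show ?case
    by (simp only: play_Suc_vplay EU_bind_pmf) (rule EU_le_const, simp)
qed

lemma backward_setter_deviation_vplay: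
  fixes uA :: "'a::finite \<Rightarrow> real"
  assumes "length h + Suc k = T"
  shows "EU uA (vplay x0 \<sigma>A (backward_voters uA u T x0) k h a)
           \<le> uA (vote_winner u (outcome uA u k) (cur_default x0 h) a)"
proof -
  let ?s = "sincere_votes u (outcome uA u k a) (outcome uA u k (cur_default x0 h))"
  have "EU uA (play x0 \<sigma>A (backward_voters uA u T x0) k (h @ [(a, ?s)]))
        \<le> uA (outcome uA u k (cur_default x0 (h @ [(a, ?s)])))"
    by (rule backward_setter_deviation) (use assms in simp)
  then show ?thesis using assms by (simp only: vplay_backward_voters outcome_after_sincere_vote)
qed

lemma vplay_voter_deviation:
  fixes u :: "'v::finite \<Rightarrow> 'a::finite \<Rightarrow> real"
  assumes len: "length h + Suc k = T"
    and cont: "\<forall>v. EU (u i) (play x0 \<sigma>A ((backward_voters uA u T x0)(i := \<sigma>')) k (h @ [(a, v)]))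
                  \<le> u i (outcome uA u k (cur_default x0 (h @ [(a, v)])))"
  shows "EU (u i) (vplay x0 \<sigma>A ((backward_voters uA u T x0)(i := \<sigma>')) k h a)
           \<le> u i (vote_winner u (outcome uA u k) (cur_default x0 h) a)"
  unfolding vplay_def EU_bind_pmf
proof (rule EU_le_const, rule ballI)
  let ?x = "cur_default x0 h" and ?\<phi> = "outcome uA u k"
  fix v assume v: "v \<in> set_pmf (vote_dist ((backward_voters uA u T x0)(i := \<sigma>')) h a)"
  have "v j = sincere_votes u (?\<phi> a) (?\<phi> ?x) j" if "j \<noteq> i" for j
    using vote_in_set_vote_dist[OF v, of j] that by (simp add: backward_voters_eq[OF len])
  then have others: "\<forall>j. j \<noteq> i \<longrightarrow> v j = sincere_votes u (?\<phi> a) (?\<phi> ?x) j" by blast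
  have "EU (u i) (play x0 \<sigma>A ((backward_voters uA u T x0)(i := \<sigma>')) k (h @ [(a, v)]))
        \<le> u i (if strict_majority v then ?\<phi> a else ?\<phi> ?x)"
    using cont by (simp add: cur_default_snoc if_distrib)
  also have "\<dots> \<le> u i (if strict_majority (sincere_votes u (?\<phi> a) (?\<phi> ?x)) then ?\<phi> a else ?\<phi> ?x)"
    by (rule sincere_vote_optimal[OF others])
  also have "\<dots> = u i (vote_winner u ?\<phi> ?x a)"
    by (simp add: vote_winner_def strict_majority_sincere_votes)
  finally show "EU (u i) (play x0 \<sigma>A ((backward_voters uA u T x0)(i := \<sigma>')) k (h @ [(a, v)]))
                \<le> u i (vote_winner u ?\<phi> ?x a)" .
qed

lemma backward_voter_deviation:
  fixes u :: "'v::finite \<Rightarrow> 'a::finite \<Rightarrow> real"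
  shows "length h + k = T \<Longrightarrow>
    EU (u i) (play x0 (backward_setter uA u T x0) ((backward_voters uA u T x0)(i := \<sigma>')) k h)
      \<le> u i (outcome uA u k (cur_default x0 h))"
proof (induction k arbitrary: h)
  case 0
  then show ?case by simp
next
  case (Suc k)
  let ?a = "best_proposal uA u (outcome uA u k) (cur_default x0 h)"
    and ?\<sigma>V = "(backward_voters uA u T x0)(i := \<sigma>')"
  have "EU (u i) (play x0 (backward_setter uA u T x0) ?\<sigma>V (Suc k) h)
        = EU (u i) (vplay x0 (backward_setter uA u T x0) ?\<sigma>V k h ?a)"
    by (simp only: play_Suc_vplay backward_setter_eq[OF Suc.prems] bind_return_pmf)
  also have "\<dots> \<le> u i (vote_winner u (outcome uA u k) (cur_default x0 h) ?a)"
    by (intro vplay_voter_deviation[OF Suc.prems] allI Suc.IH) (use Suc.prems in simp)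
  also have "\<dots> = u i (outcome uA u (Suc k) (cur_default x0 h))" by simp
  finally show ?case .
qed

lemma backward_spe:
  fixes uA :: "'a::finite \<Rightarrow> real" and u :: "'v::finite \<Rightarrow> 'a \<Rightarrow> real"
  shows "spe uA u T x0 (backward_setter uA u T x0) (backward_voters uA u T x0)"
    (is "spe _ _ _ _ ?S ?V")
  unfolding spe_def
proof (intro conjI allI impI)
  fix h :: "('a, 'v) hist" and \<sigma>A' assume "length h < T"
  then have len: "length h + (T - length h) = T" by simp
  show "EU uA (play x0 \<sigma>A' ?V (T - length h) h)
        \<le> EU uA (play x0 ?S ?V (T - length h) h)"
    using backward_setter_deviation[OF len] by (simp add: backward_play[OF len])
next
  fix h :: "('a, 'v) hist" and i \<sigma>' assume "length h < T"
  then have len: "length h + (T - length h) = T" by simp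
  show "EU (u i) (play x0 ?S (?V(i := \<sigma>')) (T - length h) h)
        \<le> EU (u i) (play x0 ?S ?V (T - length h) h)"
    using backward_voter_deviation[OF len] by (simp add: backward_play[OF len])
next
  fix h :: "('a, 'v) hist" and a \<sigma>A' assume "length h < T"
  then have len: "length h + Suc (T - Suc (length h)) = T" by simp
  show "EU uA (vplay x0 \<sigma>A' ?V (T - Suc (length h)) h a)
        \<le> EU uA (vplay x0 ?S ?V (T - Suc (length h)) h a)"
    using backward_setter_deviation_vplay[OF len] by (simp add: backward_vplay[OF len])
next
  fix h :: "('a, 'v) hist" and a i \<sigma>' assume "length h < T"
  then have len: "length h + Suc (T - Suc (length h)) = T" by simp
  have "EU (u i) (vplay x0 ?S (?V(i := \<sigma>')) (T - Suc (length h)) h a)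
        \<le> u i (vote_winner u (outcome uA u (T - Suc (length h))) (cur_default x0 h) a)"
    by (intro vplay_voter_deviation[OF len] allI backward_voter_deviation) (use len in simp)
  then show "EU (u i) (vplay x0 ?S (?V(i := \<sigma>')) (T - Suc (length h)) h a)
        \<le> EU (u i) (vplay x0 ?S ?V (T - Suc (length h)) h a)"
    by (simp add: backward_vplay[OF len])
qed

lemma backward_as_if_pivotal:
  "as_if_pivotal u T x0 (backward_setter uA u T x0) (backward_voters uA u T x0)"
    (is "as_if_pivotal _ _ _ ?S ?V")
  unfolding as_if_pivotal_def
proof (intro allI impI)
  fix h a x y i
  assume "length h < T"
    and yes: "\<forall>v. strict_majority v \<longrightarrow>
      play x0 ?S ?V (T - Suc (length h)) (h @ [(a, v)]) = return_pmf x"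
    and no: "\<forall>v. \<not> strict_majority v \<longrightarrow>
      play x0 ?S ?V (T - Suc (length h)) (h @ [(a, v)]) = return_pmf y"
  define k where "k = T - Suc (length h)"
  have len: "length h + Suc k = T" and len': "length (h @ [(a, v)]) + k = T" for v
    using \<open>length h < T\<close> by (simp_all add: k_def)
  have "x = outcome uA u k a"
    using yes[rule_format, OF strict_majority_True] backward_play[OF len']
    by (simp add: k_def[symmetric] cur_default_snoc strict_majority_True)
  moreover have "y = outcome uA u k (cur_default x0 h)"
    using no[rule_format, OF strict_majority_False] backward_play[OF len']
    by (simp add: k_def[symmetric] cur_default_snoc strict_majority_False)
  ultimately show "(u i y < u i x \<longrightarrow> ?V i h a = return_pmf True) \<and>
                   (u i x < u i y \<longrightarrow> ?V i h a = return_pmf False)"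
    by (simp add: backward_voters_eq[OF len] sincere_votes_def)
qed

lemma backward_equilibrium:
  fixes uA :: "'a::finite \<Rightarrow> real" and u :: "'v::finite \<Rightarrow> 'a \<Rightarrow> real"
  shows "equilibrium uA u T x0 (backward_setter uA u T x0) (backward_voters uA u T x0)"
  by (simp add: equilibrium_def backward_spe backward_as_if_pivotal)

lemma equilibrium_implements_fav:
  fixes uA :: "'a::finite \<Rightarrow> real" and u :: "'v::finite \<Rightarrow> 'a \<Rightarrow> real"
  assumes "inj uA" and "\<forall>i. inj (u i)" and "manipulable uA u"
    and "CARD('a) - 1 \<le> T" and "equilibrium uA u T x0 \<sigma>A \<sigma>V"
  shows "measure_pmf.prob (play x0 \<sigma>A \<sigma>V T []) (fav uA) = 1"
proof -
  have "play x0 \<sigma>A \<sigma>V T [] = return_pmf (outcome uA u T x0)"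
    using equilibrium_play[OF assms(1,2,5), of "[]" T] by simp
  moreover have "outcome uA u T x0 \<in> fav uA" by (rule outcome_in_fav[OF assms(1,3,4)])
  ultimately show ?thesis by simp
qed

lemma backward_play_misses_fav:
  fixes uA :: "'a::finite \<Rightarrow> real"
  assumes "inj uA" and "x \<notin> fav uA" and "\<not> improvable uA u x"
  shows "measure_pmf.prob
           (play x (backward_setter uA u T x) (backward_voters uA u T x) T []) (fav uA) = 0"
  using backward_play[of "[]" T T x uA u] outcome_unimprovable[OF assms(1,3)] assms(2) by simp

theorem theorem1:
  fixes uA :: "'a::finite \<Rightarrow> real" and u :: "'v::finite \<Rightarrow> 'a \<Rightarrow> real"
  assumes "odd CARD('v)"
    and "generic_finite_alternatives uA u"
  shows "(\<forall>T x0 \<sigma>A \<sigma>V. T \<ge> CARD('a) - 1 \<longrightarrow> equilibrium uA u T x0 \<sigma>A \<sigma>V \<longrightarrow>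
            measure_pmf.prob (play x0 \<sigma>A \<sigma>V T []) (fav uA) = 1)
         \<longleftrightarrow> manipulable uA u"
proof -
  have inj_A: "inj uA" and inj_u: "\<forall>i. inj (u i)"
    using assms(2) by (auto simp: generic_finite_alternatives_def)
  show ?thesis
  proof
    assume all_fav: "\<forall>T x0 \<sigma>A \<sigma>V. T \<ge> CARD('a) - 1 \<longrightarrow> equilibrium uA u T x0 \<sigma>A \<sigma>V \<longrightarrow>
                       measure_pmf.prob (play x0 \<sigma>A \<sigma>V T []) (fav uA) = 1"
    show "manipulable uA u"
    proof (rule ccontr)
      assume "\<not> manipulable uA u"
      then obtain x where "x \<notin> fav uA" and "\<not> improvable uA u x"
        unfolding manipulable_def by blast
      let ?T = "CARD('a) - 1"
      have "measure_pmf.prob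
          (play x (backward_setter uA u ?T x) (backward_voters uA u ?T x) ?T []) (fav uA) = 1"
        using all_fav backward_equilibrium[of uA u ?T x] by simp
      then show False
        using backward_play_misses_fav[OF inj_A \<open>x \<notin> fav uA\<close> \<open>\<not> improvable uA u x\<close>] by simp
    qed
  next
    assume "manipulable uA u"
    then show "\<forall>T x0 \<sigma>A \<sigma>V. T \<ge> CARD('a) - 1 \<longrightarrow> equilibrium uA u T x0 \<sigma>A \<sigma>V \<longrightarrow>
                 measure_pmf.prob (play x0 \<sigma>A \<sigma>V T []) (fav uA) = 1"
      by (intro allI impI equilibrium_implements_fav[OF inj_A inj_u])
  qed
qed

end
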